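(* Let $(\varepsilon^-_n)$, $(\varepsilon^+_n)$ be sequences with $\varepsilon^-_n\le\varepsilon^+_n$, $n^{1/3}\varepsilon^-_n\to\infty$ and $\varepsilon^+_n\to0$; let $\varepsilon_n\in[\varepsilon^-_n,\varepsilon^+_n]$, $\gamma\in[-1,1]$ and $p_n=\frac1n(1+\gamma\varepsilon_n)$. Define the process $(S_k)_{k\ge0}$ by $S_0=0$ and $S_k=S_{k-1}+X_k-1$ for $k\ge1$, where conditionally on $X_1,\dots,X_{k-1}$, $X_k$ has the Binomial$(n-k-S_{k-1},p_n)$ distribution. Then for every $\eta>0$ there is $\kappa>0$, depending only on $\eta$ and $(\varepsilon^\pm_n)$, such that \[ \mathbb{P}\left(\sup_{0\le k\le 3n\varepsilon_n}\frac{1}{n\varepsilon_n^2}\left|S_k-k\left(\gamma\varepsilon_n-\frac{k}{2n}\right)\right|>\eta\right)\le\exp(-\kappa n\varepsilon_n^3), \] the supremum being over integers $k$. *)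

theory Defs
  imports "HOL-Probability.Probability"
begin

text \<open>Law of the path (S_0, ..., S_m) as a list of length m+1 (entry k is S_k).  If n - k - S_(k-1) were negative, the
  number of trials is truncated to 0 (this never occurs for the times
  relevant to the statement once n is large).\<close>
fun expl_path :: "nat \<Rightarrow> real \<Rightarrow> nat \<Rightarrow> int list pmf" where
  "expl_path n p 0 = return_pmf [0]"
| "expl_path n p (Suc k) =
     bind_pmf (expl_path n p k)
       (\<lambda>xs. map_pmf (\<lambda>x. xs @ [last xs + int x - 1])
               (binomial_pmf (nat (int n - int (Suc k) - last xs)) p))"

end

theory Submission
  imports Defs
begin

text \<open>With \<open>f(k) = k (\<gamma>\<epsilon> - k/(2n))\<close> the approximate mean of \<open>S\<^sub>k\<close> and \<open>\<lambda> = \<eta>\<epsilon>/12\<close>, the process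
  \<open>exp(\<lambda>(S\<^sub>k - f(k)) - \<alpha>k) + exp(-\<lambda>(S\<^sub>k - f(k)) - \<alpha>k)\<close> is a supermartingale as long as \<open>S\<^sub>k\<close> stays
  within \<open>\<eta>n\<epsilon>\<^sup>2\<close> of \<open>f(k)\<close>, where \<open>\<alpha> = O(\<lambda>\<epsilon>\<^sup>2 + \<lambda>\<^sup>2)\<close> pays for the error in the binomial moment
  generating function.  Stopping it at the first large deviation and applying Markov's inequality
  bounds the probability of a deviation before time \<open>3n\<epsilon>\<close> by
  \<open>2 exp(-\<lambda>\<eta>n\<epsilon>\<^sup>2 + 3\<alpha>n\<epsilon>) \<le> 2 exp(-\<eta>\<^sup>2n\<epsilon>\<^sup>3/48)\<close>, which is at most \<open>exp(-\<eta>\<^sup>2n\<epsilon>\<^sup>3/96)\<close> once \<open>n\<epsilon>\<^sup>3\<close>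
  is large.\<close>

lemma nn_integral_exp_binomial_pmf:
  assumes "0 \<le> p" "p \<le> 1"
  shows "(\<integral>\<^sup>+x. ennreal (exp (l * real x)) \<partial>binomial_pmf N p) = ennreal ((1 - p + p * exp l) ^ N)"
proof -
  have "(\<integral>\<^sup>+x. ennreal (exp (l * real x)) \<partial>binomial_pmf N p)
      = (\<Sum>x\<in>{..N}. ennreal (exp (l * real x)) * pmf (binomial_pmf N p) x)"
    by (rule nn_integral_measure_pmf_support)
       (use assms in \<open>auto simp: set_pmf_binomial_eq split: if_splits\<close>)
  also have "\<dots> = ennreal (\<Sum>x\<le>N. exp (l * real x) * pmf (binomial_pmf N p) x)"
    by (subst sum_ennreal[symmetric]) (auto simp: ennreal_mult)
  also have "(\<Sum>x\<le>N. exp (l * real x) * pmf (binomial_pmf N p) x)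
      = (\<Sum>x\<le>N. of_nat (N choose x) * (p * exp l) ^ x * (1 - p) ^ (N - x))"
    using assms
    by (intro sum.cong) (auto simp: exp_of_nat_mult[symmetric] power_mult_distrib ac_simps)
  also have "\<dots> = (p * exp l + (1 - p)) ^ N"
    by (subst binomial_ring) simp
  finally show ?thesis
    by (simp add: algebra_simps)
qed

lemma binomial_mgf_le_exp:
  assumes "0 \<le> p" "p \<le> 1"
  shows "(1 - p + p * exp l) ^ N \<le> exp (real N * p * (exp l - 1))"
proof -
  have "0 \<le> 1 - p + p * exp l"
    using assms by (simp add: add_nonneg_nonneg)
  then have "0 \<le> 1 + p * (exp l - 1)"
    by (simp add: algebra_simps)
  then have "(1 + p * (exp l - 1)) ^ N \<le> exp (p * (exp l - 1)) ^ N"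
    by (intro power_mono exp_ge_add_one_self)
  then show ?thesis
    by (simp add: algebra_simps exp_of_nat_mult[symmetric])
qed

lemma nn_integral_exp_affine_binomial_pmf_le:
  assumes "0 \<le> p" "p \<le> 1"
  shows "(\<integral>\<^sup>+x. ennreal (exp (a + l * real x)) \<partial>binomial_pmf N p)
           \<le> ennreal (exp (a + real N * p * (exp l - 1)))"
proof -
  have "(\<integral>\<^sup>+x. ennreal (exp (a + l * real x)) \<partial>binomial_pmf N p)
      = ennreal (exp a) * (\<integral>\<^sup>+x. ennreal (exp (l * real x)) \<partial>binomial_pmf N p)"
    by (subst nn_integral_cmult[symmetric]) (simp_all add: exp_add ennreal_mult)
  also have "\<dots> = ennreal (exp a * (1 - p + p * exp l) ^ N)"
    using assms by (simp add: nn_integral_exp_binomial_pmf ennreal_mult)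
  also have "\<dots> \<le> ennreal (exp a * exp (real N * p * (exp l - 1)))"
    using binomial_mgf_le_exp[OF assms] by (intro ennreal_leI mult_left_mono) simp_all
  finally show ?thesis
    by (simp add: exp_add)
qed

lemma exp_minus_le_quadratic:
  fixes l :: real
  assumes "0 \<le> l"
  shows "exp (-l) \<le> 1 - l + l^2"
proof -
  have "exp (-l) \<le> 1 / (1 + l)"
    using assms exp_ge_add_one_self[of l] by (simp add: exp_minus field_simps)
  also have "\<dots> \<le> 1 - l + l^2"
  proof -
    have "1 \<le> (1 + l) * (1 - l + l^2)"
      using assms by (simp add: algebra_simps power2_eq_square)
    then show ?thesis
      using assms by (simp add: field_simps)
  qed
  finally show ?thesis .
qed

lemma two_mul_exp_minus_double_le:
  fixes X :: real
  assumes "1 \<le> X"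
  shows "2 * exp (-(2 * X)) \<le> exp (-X)"
proof -
  have "2 * exp (-(2 * X)) = exp (ln 2 - 2 * X)"
    by (simp add: exp_diff exp_minus field_simps)
  also have "\<dots> \<le> exp (-X)"
    using ln_2_less_1 assms by simp
  finally show ?thesis .
qed


subsection \<open>Optional stopping along the exploration process\<close>

fun stopped_value :: "(nat \<Rightarrow> int \<Rightarrow> bool) \<Rightarrow> (nat \<Rightarrow> int \<Rightarrow> real) \<Rightarrow> nat \<Rightarrow> int list \<Rightarrow> real" where
  "stopped_value B H 0 xs = H 0 (xs ! 0)"
| "stopped_value B H (Suc k) xs =
     (if \<exists>j\<le>k. B j (xs ! j) then stopped_value B H k xs else H (Suc k) (xs ! Suc k))"

lemma stopped_value_append:
  "k < length xs \<Longrightarrow> stopped_value B H k (xs @ ys) = stopped_value B H k xs"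
proof (induction k)
  case (Suc k)
  have "(\<exists>j\<le>k. B j ((xs @ ys) ! j)) = (\<exists>j\<le>k. B j (xs ! j))"
    using Suc.prems by (metis Suc_lessD le_imp_less_Suc less_trans_Suc nth_append_left)
  then show ?case
    using Suc by (fastforce simp: nth_append)
qed (simp add: nth_append)

lemma stopped_value_at_hit:
  "\<exists>j\<le>k. B j (xs ! j) \<Longrightarrow> \<exists>j\<le>k. B j (xs ! j) \<and> stopped_value B H k xs = H j (xs ! j)"
proof (induction k)
  case (Suc k)
  show ?case
  proof (cases "\<exists>j\<le>k. B j (xs ! j)")
    case True
    then show ?thesis
      using Suc.IH by (auto intro: le_SucI)
  next
    case False
    then have "B (Suc k) (xs ! Suc k)"
      using Suc.prems le_Suc_eq by blast
    then show ?thesis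
      using False by auto
  qed
qed simp

lemma stopped_value_no_hit:
  "\<not> (\<exists>j\<le>k. B j (xs ! j)) \<Longrightarrow> stopped_value B H k xs = H k (xs ! k)"
  by (cases k) auto

lemma length_expl_path: "xs \<in> set_pmf (expl_path n p k) \<Longrightarrow> length xs = Suc k"
  by (induction k arbitrary: xs) auto

lemma nn_integral_stopped_value_le:
  assumes step: "\<And>j s. j < K \<Longrightarrow> \<not> B j s \<Longrightarrow>
      (\<integral>\<^sup>+x. ennreal (H (Suc j) (s + int x - 1)) \<partial>binomial_pmf (nat (int n - int (Suc j) - s)) p)
        \<le> ennreal (H j s)"
    and "k \<le> K"
  shows "(\<integral>\<^sup>+xs. ennreal (stopped_value B H k xs) \<partial>expl_path n p k) \<le> ennreal (H 0 0)"
  using \<open>k \<le> K\<close>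
proof (induction k)
  case (Suc k)
  have "(\<integral>\<^sup>+xs. ennreal (stopped_value B H (Suc k) xs) \<partial>expl_path n p (Suc k))
     = (\<integral>\<^sup>+xs. \<integral>\<^sup>+x. ennreal (stopped_value B H (Suc k) (xs @ [last xs + int x - 1]))
          \<partial>binomial_pmf (nat (int n - int (Suc k) - last xs)) p \<partial>expl_path n p k)"
    by simp
  also have "\<dots> \<le> (\<integral>\<^sup>+xs. ennreal (stopped_value B H k xs) \<partial>expl_path n p k)"
  proof (rule nn_integral_mono_AE, rule AE_pmfI)
    fix xs
    assume "xs \<in> set_pmf (expl_path n p k)"
    then have len: "length xs = Suc k"
      by (rule length_expl_path)
    then have hit_append: "(\<exists>j\<le>k. B j ((xs @ [y]) ! j)) = (\<exists>j\<le>k. B j (xs ! j))" for y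
      by (metis le_imp_less_Suc nth_append_left)
    show "(\<integral>\<^sup>+x. ennreal (stopped_value B H (Suc k) (xs @ [last xs + int x - 1]))
          \<partial>binomial_pmf (nat (int n - int (Suc k) - last xs)) p) \<le> ennreal (stopped_value B H k xs)"
    proof (cases "\<exists>j\<le>k. B j (xs ! j)")
      case True
      then have "stopped_value B H (Suc k) (xs @ [y]) = stopped_value B H k xs" for y
        using len hit_append by (simp add: stopped_value_append)
      then show ?thesis
        by simp
    next
      case False
      have "stopped_value B H (Suc k) (xs @ [y]) = H (Suc k) y" for y
        using False len by (simp add: hit_append nth_append)
      moreover have "last xs = xs ! k"
        using len by (cases xs rule: rev_cases) auto
      ultimately show ?thesis
        using step[of k "last xs"] Suc.prems False stopped_value_no_hit[of k B xs H] by simp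
    qed
  qed
  also have "\<dots> \<le> ennreal (H 0 0)"
    using Suc by simp
  finally show ?case .
qed simp

lemma prob_expl_path_hit_le:
  assumes H_nonneg: "\<And>j s. 0 \<le> H j s"
    and step: "\<And>j s. j < K \<Longrightarrow> \<not> B j s \<Longrightarrow>
      (\<integral>\<^sup>+x. ennreal (H (Suc j) (s + int x - 1)) \<partial>binomial_pmf (nat (int n - int (Suc j) - s)) p)
        \<le> ennreal (H j s)"
    and hit: "\<And>j s. j \<le> K \<Longrightarrow> B j s \<Longrightarrow> A \<le> H j s" and "0 < A"
  shows "measure_pmf.prob (expl_path n p K) {xs. \<exists>j\<le>K. B j (xs ! j)} \<le> H 0 0 / A"
proof -
  let ?E = "{xs. \<exists>j\<le>K. B j (xs ! j)}"
  let ?M = "expl_path n p K"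
  have "ennreal A * emeasure ?M ?E = (\<integral>\<^sup>+xs. ennreal A * indicator ?E xs \<partial>?M)"
    by (simp add: nn_integral_cmult_indicator)
  also have "\<dots> \<le> (\<integral>\<^sup>+xs. ennreal (stopped_value B H K xs) \<partial>?M)"
  proof (rule nn_integral_mono)
    fix xs
    show "ennreal A * indicator ?E xs \<le> ennreal (stopped_value B H K xs)"
    proof (cases "xs \<in> ?E")
      case True
      then obtain j where "j \<le> K" "B j (xs ! j)" "stopped_value B H K xs = H j (xs ! j)"
        using stopped_value_at_hit[of K B xs H] by auto
      then show ?thesis
        using hit True by (auto intro: ennreal_leI)
    qed simp
  qed
  also have "\<dots> \<le> ennreal (H 0 0)"
    using nn_integral_stopped_value_le[OF step order.refl] .
  finally have "ennreal (A * measure_pmf.prob ?M ?E) \<le> ennreal (H 0 0)"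
    using \<open>0 < A\<close> by (simp add: measure_pmf.emeasure_eq_measure ennreal_mult)
  then have "A * measure_pmf.prob ?M ?E \<le> H 0 0"
    using H_nonneg by (simp add: ennreal_le_iff)
  then show ?thesis
    using \<open>0 < A\<close> by (simp add: field_simps)
qed


subsection \<open>The exponential supermartingale\<close>

definition potential :: "real \<Rightarrow> real \<Rightarrow> (nat \<Rightarrow> real) \<Rightarrow> nat \<Rightarrow> int \<Rightarrow> real" where
  "potential l \<alpha> c j s = exp (l * (s - c j) - \<alpha> * j) + exp (- l * (s - c j) - \<alpha> * j)"

lemma potential_nonneg: "0 \<le> potential l \<alpha> c j s"
  by (simp add: potential_def add_nonneg_nonneg)

lemma potential_ge_of_deviation:
  fixes l \<alpha> t :: real and K :: nat
  assumes "0 \<le> l" "0 \<le> \<alpha>" "j \<le> K" "t < \<bar>s - c j\<bar>"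
  shows "exp (l * t - \<alpha> * K) \<le> potential l \<alpha> c j s"
proof -
  have "\<alpha> * j \<le> \<alpha> * K"
    using assms by (simp add: mult_left_mono)
  moreover have "l * t \<le> l * (s - c j) \<or> l * t \<le> - l * (s - c j)"
  proof (cases "0 \<le> s - c j")
    case True
    then show ?thesis
      using assms by (simp add: mult_left_mono)
  next
    case False
    then have "l * t \<le> l * (- (s - c j))"
      using assms by (intro mult_left_mono) auto
    then show ?thesis
      by (simp add: algebra_simps)
  qed
  ultimately have "exp (l * t - \<alpha> * K) \<le> exp (l * (s - c j) - \<alpha> * j)
                 \<or> exp (l * t - \<alpha> * K) \<le> exp (- l * (s - c j) - \<alpha> * j)"
    by auto
  moreover have "0 < exp (l * (s - c j) - \<alpha> * j)" "0 < exp (- l * (s - c j) - \<alpha> * j)"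
    by simp_all
  ultimately show ?thesis
    unfolding potential_def by linarith
qed

text \<open>The last two hypotheses bound \<open>E exp(\<plusminus>l X)\<close> for \<open>X ~ Bin(N, p)\<close> by \<open>exp(\<plusminus>l d + \<alpha>)\<close>:
  \<open>d\<close> stands in for the mean of \<open>X\<close>, and the centring \<open>c\<close> follows the resulting drift \<open>d - 1\<close>.\<close>

lemma potential_binomial_step:
  assumes "0 \<le> p" "p \<le> 1"
    and "c (Suc j) = c j + d - 1"
    and "real N * p * (exp l - 1) \<le> l * d + \<alpha>"
    and "real N * p * (exp (-l) - 1) \<le> - l * d + \<alpha>"
  shows "(\<integral>\<^sup>+x. ennreal (potential l \<alpha> c (Suc j) (s + int x - 1)) \<partial>binomial_pmf N p)
           \<le> ennreal (potential l \<alpha> c j s)"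
proof -
  define a where "a = l * (s - c j - d) - \<alpha> * Suc j"
  define b where "b = - l * (s - c j - d) - \<alpha> * Suc j"
  have split: "potential l \<alpha> c (Suc j) (s + int x - 1) = exp (a + l * x) + exp (b + (- l) * x)" for x
    unfolding potential_def a_def b_def using assms(3) by (simp add: algebra_simps)
  have "(\<integral>\<^sup>+x. ennreal (potential l \<alpha> c (Suc j) (s + int x - 1)) \<partial>binomial_pmf N p)
      = (\<integral>\<^sup>+x. ennreal (exp (a + l * x)) \<partial>binomial_pmf N p)
        + (\<integral>\<^sup>+x. ennreal (exp (b + (- l) * x)) \<partial>binomial_pmf N p)"
    unfolding split by (subst nn_integral_add[symmetric]) (auto simp: ennreal_plus)
  also have "\<dots> \<le> ennreal (exp (a + real N * p * (exp l - 1)))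
                  + ennreal (exp (b + real N * p * (exp (- l) - 1)))"
    using assms(1,2) by (intro add_mono nn_integral_exp_affine_binomial_pmf_le)
  also have "\<dots> \<le> ennreal (exp (l * (s - c j) - \<alpha> * j)) + ennreal (exp (- l * (s - c j) - \<alpha> * j))"
    using assms(4,5) unfolding a_def b_def by (intro add_mono ennreal_leI) (simp_all add: algebra_simps)
  also have "\<dots> = ennreal (potential l \<alpha> c j s)"
    by (simp add: potential_def ennreal_plus)
  finally show ?thesis .
qed


lemma exp_drift_bounds:
  fixes \<epsilon> \<gamma> u v w l :: real
  assumes e: "0 < \<epsilon>" "\<epsilon> \<le> 1/168" and g: "\<bar>\<gamma>\<bar> \<le> 1" and u: "\<bar>u\<bar> \<le> 9 * \<epsilon>^2"
    and v: "0 \<le> v" "v \<le> 3 * \<epsilon>" and w: "0 \<le> w" "w \<le> \<epsilon>^3" and l: "0 \<le> l" "l \<le> 1"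
  shows "0 < 1 - v - u"
    and "(1 + \<gamma> * \<epsilon>) * (1 - v - u) * (exp l - 1)
           \<le> l * (1 + \<gamma> * \<epsilon> - v + w/2) + (14 * l * \<epsilon>^2 + 2 * l^2)"
    and "(1 + \<gamma> * \<epsilon>) * (1 - v - u) * (exp (-l) - 1)
           \<le> - l * (1 + \<gamma> * \<epsilon> - v + w/2) + (14 * l * \<epsilon>^2 + 2 * l^2)"
proof -
  define Q where "Q = (1 + \<gamma> * \<epsilon>) * (1 - v - u)"
  define R where "R = 1 + \<gamma> * \<epsilon> - v + w/2"
  have e2: "\<epsilon>^2 \<le> \<epsilon>/168"
    using e by (simp add: power2_eq_square mult_left_mono)
  have e3: "\<epsilon>^3 \<le> \<epsilon>^2"
    using e by (simp add: power2_eq_square power3_eq_cube)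
  have ge: "\<bar>\<gamma> * \<epsilon>\<bar> \<le> \<epsilon>"
    using g e by (simp add: abs_mult mult_left_le_one_le)
  show pos: "0 < 1 - v - u"
    using u v e e2 by linarith
  have "\<bar>(\<gamma> * \<epsilon>) * (v + u)\<bar> \<le> \<epsilon> * (4 * \<epsilon>)"
  proof -
    have "\<bar>v + u\<bar> \<le> 4 * \<epsilon>"
      using u v e2 by linarith
    then show ?thesis
      unfolding abs_mult[of "\<gamma> * \<epsilon>"] using ge by (intro mult_mono) auto
  qed
  moreover have "Q - R = - u - (\<gamma> * \<epsilon>) * (v + u) - w/2"
    unfolding Q_def R_def by (simp add: algebra_simps)
  ultimately have QR: "\<bar>Q - R\<bar> \<le> 14 * \<epsilon>^2"
    using u w e3 by (simp add: power2_eq_square)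
  have Q0: "0 \<le> Q"
    unfolding Q_def using pos ge e by (intro mult_nonneg_nonneg) auto
  have "Q \<le> (1 + \<epsilon>) * (1 + \<epsilon>)"
    unfolding Q_def using ge g u v e e2 by (intro mult_mono) auto
  also have "\<dots> \<le> (1 + 1/168) * (1 + 1/168)"
    using e by (intro mult_mono) auto
  finally have Q2: "Q \<le> 2"
    by simp
  have "Q * (exp l - 1) \<le> Q * (l + l^2)"
    using exp_bound[OF l] Q0 by (intro mult_left_mono) auto
  also have "\<dots> = l * Q + l^2 * Q"
    by (simp add: algebra_simps)
  also have "\<dots> \<le> l * (R + 14 * \<epsilon>^2) + l^2 * 2"
    using QR Q2 l by (intro add_mono mult_left_mono) auto
  finally show "(1 + \<gamma> * \<epsilon>) * (1 - v - u) * (exp l - 1)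
      \<le> l * (1 + \<gamma> * \<epsilon> - v + w/2) + (14 * l * \<epsilon>^2 + 2 * l^2)"
    unfolding Q_def[symmetric] R_def[symmetric] by (simp add: algebra_simps)
  have "Q * (exp (-l) - 1) \<le> Q * (- l + l^2)"
    using exp_minus_le_quadratic[OF l(1)] Q0 by (intro mult_left_mono) auto
  also have "\<dots> = - (l * Q) + l^2 * Q"
    by (simp add: algebra_simps)
  also have "\<dots> \<le> - (l * (R - 14 * \<epsilon>^2)) + l^2 * 2"
    using QR Q2 l by (intro add_mono mult_left_mono le_imp_neg_le) auto
  finally show "(1 + \<gamma> * \<epsilon>) * (1 - v - u) * (exp (-l) - 1)
      \<le> - l * (1 + \<gamma> * \<epsilon> - v + w/2) + (14 * l * \<epsilon>^2 + 2 * l^2)"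
    unfolding Q_def[symmetric] R_def[symmetric] by (simp add: algebra_simps)
qed


subsection \<open>Concentration around the fluid limit\<close>

definition fluid :: "nat \<Rightarrow> real \<Rightarrow> real \<Rightarrow> nat \<Rightarrow> real" where
  "fluid n \<gamma> \<epsilon> k = real k * (\<gamma> * \<epsilon> - real k / (2 * real n))"

lemma fluid_Suc:
  "0 < n \<Longrightarrow> fluid n \<gamma> \<epsilon> (Suc j) = fluid n \<gamma> \<epsilon> j + (\<gamma> * \<epsilon> - real (Suc j) / real n + 1 / (2 * real n))"
  unfolding fluid_def by (simp add: field_simps)

lemma abs_fluid_le:
  assumes "0 < \<epsilon>" "\<bar>\<gamma>\<bar> \<le> 1" "0 < n" "real j \<le> 3 * real n * \<epsilon>"
  shows "\<bar>fluid n \<gamma> \<epsilon> j\<bar> \<le> 15/2 * real n * \<epsilon>^2"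
proof -
  have "real j * real j \<le> (3 * real n * \<epsilon>) * (3 * real n * \<epsilon>)"
    using assms by (intro mult_mono) auto
  then have quadratic: "real j * real j / (2 * real n) \<le> 9/2 * real n * \<epsilon>^2"
    using assms by (simp add: field_simps power2_eq_square)
  have "fluid n \<gamma> \<epsilon> j = real j * (\<gamma> * \<epsilon>) - real j * real j / (2 * real n)"
    unfolding fluid_def by (simp add: algebra_simps)
  then have "\<bar>fluid n \<gamma> \<epsilon> j\<bar> \<le> \<bar>real j * (\<gamma> * \<epsilon>)\<bar> + real j * real j / (2 * real n)"
    using abs_triangle_ineq4[of "real j * (\<gamma> * \<epsilon>)" "real j * real j / (2 * real n)"] by simp
  also have "\<dots> \<le> (3 * real n * \<epsilon>) * \<epsilon> + 9/2 * real n * \<epsilon>^2"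
    unfolding abs_mult using assms quadratic
    by (intro add_mono mult_mono) (auto simp: mult_left_le_one_le)
  also have "\<dots> = 15/2 * real n * \<epsilon>^2"
    by (simp add: power2_eq_square algebra_simps)
  finally show ?thesis .
qed

lemma potential_step_expl_path:
  fixes n :: nat and \<epsilon> \<gamma> l :: real and s :: int
  assumes e: "0 < \<epsilon>" "\<epsilon> \<le> 1/168" and g: "\<bar>\<gamma>\<bar> \<le> 1" and l: "0 \<le> l" "l \<le> 1"
    and n: "2 \<le> n" "1 \<le> real n * \<epsilon>^3"
    and j: "real (Suc j) \<le> 3 * real n * \<epsilon>"
    and s: "\<bar>real_of_int s - fluid n \<gamma> \<epsilon> j\<bar> \<le> real n * \<epsilon>^2"
  defines "\<alpha> \<equiv> 14 * l * \<epsilon>^2 + 2 * l^2"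
  shows "(\<integral>\<^sup>+x. ennreal (potential l \<alpha> (fluid n \<gamma> \<epsilon>) (Suc j) (s + int x - 1))
            \<partial>binomial_pmf (nat (int n - int (Suc j) - s)) ((1 + \<gamma> * \<epsilon>) / real n))
         \<le> ennreal (potential l \<alpha> (fluid n \<gamma> \<epsilon>) j s)"
proof -
  define u v w where "u = real_of_int s / real n" and "v = Suc j / real n" and "w = 1 / real n"
  have nR: "2 \<le> real n"
    using n by simp
  have ge: "\<bar>\<gamma> * \<epsilon>\<bar> \<le> \<epsilon>"
    using g e by (simp add: abs_mult mult_left_le_one_le)
  have "\<bar>fluid n \<gamma> \<epsilon> j\<bar> \<le> 15/2 * real n * \<epsilon>^2"
    using e g nR j by (intro abs_fluid_le) auto
  then have "\<bar>real_of_int s\<bar> \<le> 9 * real n * \<epsilon>^2"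
    using s by linarith
  then have u: "\<bar>u\<bar> \<le> 9 * \<epsilon>^2"
    unfolding u_def using nR by (simp add: divide_le_eq mult.commute mult.left_commute)
  have v: "0 \<le> v" "v \<le> 3 * \<epsilon>"
    unfolding v_def using j nR by (auto simp: field_simps)
  have w: "0 \<le> w" "w \<le> \<epsilon>^3"
    unfolding w_def using n nR by (auto simp: field_simps)
  note drift = exp_drift_bounds[OF e g u v w l]
  have trials: "real n * (1 - v - u) = real n - real (Suc j) - real_of_int s"
    unfolding u_def v_def using nR by (simp add: field_simps)
  moreover have "0 < real n * (1 - v - u)"
    using drift(1) nR by simp
  ultimately have "0 \<le> int n - int (Suc j) - s"
    by linarith
  then have "real (nat (int n - int (Suc j) - s)) = real n * (1 - v - u)"
    unfolding trials by (simp add: of_nat_nat)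
  then have mean: "real (nat (int n - int (Suc j) - s)) * ((1 + \<gamma> * \<epsilon>) / real n)
                   = (1 + \<gamma> * \<epsilon>) * (1 - v - u)"
    by (simp only:) (use nR in \<open>simp add: field_simps\<close>)
  have "0 \<le> 1 + \<gamma> * \<epsilon>" "1 + \<gamma> * \<epsilon> \<le> real n"
    using ge e nR by linarith+
  then have p: "0 \<le> (1 + \<gamma> * \<epsilon>) / real n" "(1 + \<gamma> * \<epsilon>) / real n \<le> 1"
    using nR by auto
  show ?thesis
  proof (rule potential_binomial_step[OF p])
    have "fluid n \<gamma> \<epsilon> (Suc j)
          = fluid n \<gamma> \<epsilon> j + (\<gamma> * \<epsilon> - real (Suc j) / real n + 1 / (2 * real n))"
      using nR by (intro fluid_Suc) simp
    then show "fluid n \<gamma> \<epsilon> (Suc j) = fluid n \<gamma> \<epsilon> j + (1 + \<gamma> * \<epsilon> - v + w/2) - 1"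
      unfolding v_def w_def by simp
  qed (use drift(2,3) in \<open>simp_all only: mean \<alpha>_def\<close>)
qed

lemma deviation_exponent_ge:
  fixes \<eta> \<epsilon> :: real and n K :: nat
  assumes \<eta>: "0 < \<eta>" and e: "0 < \<epsilon>" "\<epsilon> \<le> \<eta>/168" and K: "real K \<le> 3 * real n * \<epsilon>"
  defines "l \<equiv> \<eta> / 12 * \<epsilon>"
  shows "\<eta>^2 / 48 * (real n * \<epsilon>^3) \<le> l * (\<eta> * (real n * \<epsilon>^2)) - (14 * l * \<epsilon>^2 + 2 * l^2) * K"
proof -
  have "7/2 * \<eta> * \<epsilon> \<le> \<eta>^2 / 48"
    using e \<eta> by (simp add: power2_eq_square)
  then have small: "(7/2 * \<eta> * \<epsilon>) * (real n * \<epsilon>^3) \<le> \<eta>^2 / 48 * (real n * \<epsilon>^3)"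
    using e by (intro mult_right_mono) auto
  have "(14 * l * \<epsilon>^2 + 2 * l^2) * K \<le> (14 * l * \<epsilon>^2 + 2 * l^2) * (3 * real n * \<epsilon>)"
    using K \<eta> e unfolding l_def by (intro mult_left_mono) auto
  also have "\<dots> = (7/2 * \<eta> * \<epsilon>) * (real n * \<epsilon>^3) + \<eta>^2 / 24 * (real n * \<epsilon>^3)"
    unfolding l_def by (simp add: algebra_simps power2_eq_square power3_eq_cube)
  also have "\<dots> \<le> \<eta>^2 / 48 * (real n * \<epsilon>^3) + \<eta>^2 / 24 * (real n * \<epsilon>^3)"
    using small by (rule add_right_mono)
  finally have "(14 * l * \<epsilon>^2 + 2 * l^2) * K \<le> \<eta>^2 / 48 * (real n * \<epsilon>^3) + \<eta>^2 / 24 * (real n * \<epsilon>^3)" .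
  moreover have "l * (\<eta> * (real n * \<epsilon>^2)) = \<eta>^2 / 12 * (real n * \<epsilon>^3)"
    unfolding l_def by (simp add: algebra_simps power2_eq_square power3_eq_cube)
  ultimately show ?thesis
    by linarith
qed

lemma prob_deviation_le:
  fixes n :: nat and \<epsilon> \<gamma> \<eta> :: real
  assumes \<eta>: "0 < \<eta>" "\<eta> \<le> 1" and e: "0 < \<epsilon>" "\<epsilon> \<le> \<eta>/168" and g: "\<bar>\<gamma>\<bar> \<le> 1"
    and n: "2 \<le> n" "96 / \<eta>^2 \<le> real n * \<epsilon>^3"
  defines "K \<equiv> nat \<lfloor>3 * real n * \<epsilon>\<rfloor>"
  shows "measure_pmf.prob (expl_path n ((1 + \<gamma> * \<epsilon>) / real n) K)
           {xs. \<exists>k\<le>K. \<eta> * (real n * \<epsilon>^2) < \<bar>real_of_int (xs ! k) - fluid n \<gamma> \<epsilon> k\<bar>}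
         \<le> exp (- (\<eta>^2 / 96) * real n * \<epsilon>^3)"
proof -
  define l where "l = \<eta> / 12 * \<epsilon>"
  define \<alpha> where "\<alpha> = 14 * l * \<epsilon>^2 + 2 * l^2"
  define t where "t = \<eta> * (real n * \<epsilon>^2)"
  define X where "X = \<eta>^2 / 96 * (real n * \<epsilon>^3)"
  have "96 \<le> 96 / \<eta>^2"
    using \<eta> by (simp add: field_simps power_le_one)
  then have X: "1 \<le> X" "1 \<le> real n * \<epsilon>^3"
    unfolding X_def using n \<eta> by (simp add: field_simps, linarith)
  have K: "real K \<le> 3 * real n * \<epsilon>"
    unfolding K_def using e by (simp add: of_nat_nat)
  have nonneg: "0 \<le> l" "0 \<le> \<alpha>"
    unfolding \<alpha>_def l_def using \<eta> e by simp_all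
  have e': "0 < \<epsilon>" "\<epsilon> \<le> 1/168"
    using e \<eta> by simp_all
  have "\<eta> * \<epsilon> \<le> 1 * 1"
    using \<eta> e' by (intro mult_mono) auto
  then have l1: "l \<le> 1"
    unfolding l_def by simp
  have t: "t \<le> real n * \<epsilon>^2"
    unfolding t_def using \<eta> e by (intro mult_left_le_one_le) auto
  have "measure_pmf.prob (expl_path n ((1 + \<gamma> * \<epsilon>) / real n) K)
           {xs. \<exists>k\<le>K. t < \<bar>real_of_int (xs ! k) - fluid n \<gamma> \<epsilon> k\<bar>}
        \<le> potential l \<alpha> (fluid n \<gamma> \<epsilon>) 0 0 / exp (l * t - \<alpha> * K)"
  proof (rule prob_expl_path_hit_le)
    show "(\<integral>\<^sup>+x. ennreal (potential l \<alpha> (fluid n \<gamma> \<epsilon>) (Suc j) (s + int x - 1))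
            \<partial>binomial_pmf (nat (int n - int (Suc j) - s)) ((1 + \<gamma> * \<epsilon>) / real n))
          \<le> ennreal (potential l \<alpha> (fluid n \<gamma> \<epsilon>) j s)"
      if "j < K" "\<not> t < \<bar>real_of_int s - fluid n \<gamma> \<epsilon> j\<bar>" for j s
    proof -
      have "real (Suc j) \<le> real K"
        using that(1) by simp
      then have "real (Suc j) \<le> 3 * real n * \<epsilon>"
        using K by linarith
      moreover have "\<bar>real_of_int s - fluid n \<gamma> \<epsilon> j\<bar> \<le> real n * \<epsilon>^2"
        using that(2) t by linarith
      ultimately show ?thesis
        unfolding \<alpha>_def by (rule potential_step_expl_path[OF e' g nonneg(1) l1 n(1) X(2)])
    qed
  next
    show "exp (l * t - \<alpha> * K) \<le> potential l \<alpha> (fluid n \<gamma> \<epsilon>) j s"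
      if "j \<le> K" "t < \<bar>real_of_int s - fluid n \<gamma> \<epsilon> j\<bar>" for j s
      using nonneg that by (rule potential_ge_of_deviation)
  qed (simp_all add: potential_nonneg)
  also have "potential l \<alpha> (fluid n \<gamma> \<epsilon>) 0 0 = 2"
    by (simp add: potential_def fluid_def)
  also have "2 / exp (l * t - \<alpha> * K) = 2 * exp (- (l * t - \<alpha> * K))"
    unfolding exp_minus by (simp add: divide_inverse)
  also have "\<dots> \<le> 2 * exp (- (2 * X))"
  proof -
    have "2 * X \<le> l * t - \<alpha> * K"
      using deviation_exponent_ge[OF \<eta>(1) e K] unfolding X_def t_def \<alpha>_def l_def by linarith
    then show ?thesis
      by simp
  qed
  also have "\<dots> \<le> exp (- X)"
    using X(1) by (rule two_mul_exp_minus_double_le)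
  finally show ?thesis
    unfolding X_def t_def by (simp add: algebra_simps)
qed

lemma eventually_exploration_window:
  fixes em ep :: "nat \<Rightarrow> real" and c C :: real
  assumes "filterlim (\<lambda>n. real n powr (1/3) * em n) at_top sequentially" and "ep \<longlonglongrightarrow> 0"
    and "0 < c"
  shows "eventually (\<lambda>n. 2 \<le> n \<and>
           (\<forall>\<epsilon>. em n \<le> \<epsilon> \<and> \<epsilon> \<le> ep n \<longrightarrow> 0 < \<epsilon> \<and> \<epsilon> \<le> c \<and> C \<le> real n * \<epsilon>^3)) sequentially"
proof -
  define M where "M = max 1 C"
  have M: "1 \<le> M" "C \<le> M"
    by (simp_all add: M_def)
  have "M * 1 \<le> M * M^2"
    using M by (intro mult_left_mono) (auto simp: one_le_power)
  then have "M \<le> M^3"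
    by (simp add: power3_eq_cube power2_eq_square)
  then have M3: "C \<le> M^3"
    using M by linarith
  have "eventually (\<lambda>n. M \<le> real n powr (1/3) * em n) sequentially"
    using assms(1) unfolding filterlim_at_top by blast
  moreover have "eventually (\<lambda>n. ep n < c) sequentially"
    using order_tendstoD(2)[OF assms(2,3)] .
  moreover have "eventually (\<lambda>n. 2 \<le> n) sequentially"
    by (rule eventually_ge_at_top)
  ultimately show ?thesis
  proof eventually_elim
    case (elim n)
    define r where "r = real n powr (1/3)"
    have r: "0 < r" "r^3 = real n"
      unfolding r_def using elim by (simp_all add: powr_power)
    have em: "0 < em n"
      using elim M r(1) unfolding r_def[symmetric] by (smt (verit) mult_nonneg_nonpos)
    have "0 < \<epsilon> \<and> \<epsilon> \<le> c \<and> C \<le> real n * \<epsilon>^3" if "em n \<le> \<epsilon>" "\<epsilon> \<le> ep n" for \<epsilon>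
    proof -
      have "M^3 \<le> (r * em n)^3"
        using elim M unfolding r_def[symmetric] by (intro power_mono) auto
      also have "\<dots> = real n * em n ^ 3"
        using r by (simp add: power_mult_distrib)
      also have "\<dots> \<le> real n * \<epsilon>^3"
        using em that by (intro mult_left_mono power_mono) auto
      finally show ?thesis
        using M3 em that elim by linarith
    qed
    then show ?case
      using elim by blast
  qed
qed

lemma prob_max_deviation_le:
  fixes n :: nat and \<epsilon> \<gamma> \<eta> \<eta>' :: real
  assumes \<eta>': "0 < \<eta>'" "\<eta>' \<le> 1" "\<eta>' \<le> \<eta>" and e: "0 < \<epsilon>" "\<epsilon> \<le> \<eta>'/168" and g: "\<bar>\<gamma>\<bar> \<le> 1"
    and n: "2 \<le> n" "96 / \<eta>'^2 \<le> real n * \<epsilon>^3"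
  defines "K \<equiv> nat \<lfloor>3 * real n * \<epsilon>\<rfloor>"
  shows "measure_pmf.prob (expl_path n ((1 + \<gamma> * \<epsilon>) / real n) K)
           {xs. (MAX k\<in>{0..K}. \<bar>real_of_int (xs ! k) - fluid n \<gamma> \<epsilon> k\<bar> / (real n * \<epsilon>^2)) > \<eta>}
         \<le> exp (- (\<eta>'^2 / 96) * real n * \<epsilon>^3)"
proof -
  have scale: "0 < real n * \<epsilon>^2"
    using n e by simp
  have "{xs. (MAX k\<in>{0..K}. \<bar>real_of_int (xs ! k) - fluid n \<gamma> \<epsilon> k\<bar> / (real n * \<epsilon>^2)) > \<eta>}
        \<subseteq> {xs. \<exists>k\<le>K. \<eta>' * (real n * \<epsilon>^2) < \<bar>real_of_int (xs ! k) - fluid n \<gamma> \<epsilon> k\<bar>}"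
  proof safe
    fix xs
    assume "\<eta> < (MAX k\<in>{0..K}. \<bar>real_of_int (xs ! k) - fluid n \<gamma> \<epsilon> k\<bar> / (real n * \<epsilon>^2))"
    then obtain k where "k \<le> K" "\<eta> < \<bar>real_of_int (xs ! k) - fluid n \<gamma> \<epsilon> k\<bar> / (real n * \<epsilon>^2)"
      by (subst (asm) Max_gr_iff) auto
    moreover have "\<eta>' * (real n * \<epsilon>^2) \<le> \<eta> * (real n * \<epsilon>^2)"
      using \<eta>' scale by (intro mult_right_mono) auto
    ultimately show "\<exists>k\<le>K. \<eta>' * (real n * \<epsilon>^2) < \<bar>real_of_int (xs ! k) - fluid n \<gamma> \<epsilon> k\<bar>"
      using scale by (auto simp: less_divide_eq)
  qed
  then have "measure_pmf.prob (expl_path n ((1 + \<gamma> * \<epsilon>) / real n) K)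
           {xs. (MAX k\<in>{0..K}. \<bar>real_of_int (xs ! k) - fluid n \<gamma> \<epsilon> k\<bar> / (real n * \<epsilon>^2)) > \<eta>}
        \<le> measure_pmf.prob (expl_path n ((1 + \<gamma> * \<epsilon>) / real n) K)
           {xs. \<exists>k\<le>K. \<eta>' * (real n * \<epsilon>^2) < \<bar>real_of_int (xs ! k) - fluid n \<gamma> \<epsilon> k\<bar>}"
    by (intro measure_pmf.finite_measure_mono) auto
  also have "\<dots> \<le> exp (- (\<eta>'^2 / 96) * real n * \<epsilon>^3)"
    unfolding K_def using \<eta>'(1,2) e g n by (rule prob_deviation_le)
  finally show ?thesis .
qed

theorem proposition3p2:
  fixes em ep :: "nat \<Rightarrow> real" and \<eta> :: real
  assumes "\<And>n. em n \<le> ep n"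
    and "filterlim (\<lambda>n. real n powr (1/3) * em n) at_top sequentially"
    and "ep \<longlonglongrightarrow> 0"
    and "\<eta> > 0"
  shows "\<exists>\<kappa>>0. \<exists>N. \<forall>n\<ge>N. \<forall>\<epsilon> \<gamma>.
           em n \<le> \<epsilon> \<and> \<epsilon> \<le> ep n \<and> -1 \<le> \<gamma> \<and> \<gamma> \<le> 1 \<longrightarrow>
           (let p = (1 + \<gamma> * \<epsilon>) / real n; K = nat \<lfloor>3 * real n * \<epsilon>\<rfloor> in
            measure_pmf.prob (expl_path n p K)
              {xs. (MAX k\<in>{0..K}. \<bar>real_of_int (xs ! k) - real k * (\<gamma> * \<epsilon> - real k / (2 * real n))\<bar>
                      / (real n * \<epsilon>^2)) > \<eta>}
            \<le> exp (- \<kappa> * real n * \<epsilon>^3))"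
proof -
  define \<eta>' where "\<eta>' = min \<eta> 1"
  have \<eta>': "0 < \<eta>'" "\<eta>' \<le> 1" "\<eta>' \<le> \<eta>"
    using assms(4) by (auto simp: \<eta>'_def)
  obtain N where N: "\<And>n. N \<le> n \<Longrightarrow> 2 \<le> n \<and> (\<forall>\<epsilon>. em n \<le> \<epsilon> \<and> \<epsilon> \<le> ep n \<longrightarrow>
                       0 < \<epsilon> \<and> \<epsilon> \<le> \<eta>'/168 \<and> 96 / \<eta>'^2 \<le> real n * \<epsilon>^3)"
    using eventually_exploration_window[OF assms(2,3), of "\<eta>'/168" "96 / \<eta>'^2"] \<eta>'
    unfolding eventually_sequentially by auto
  have "measure_pmf.prob (expl_path n ((1 + \<gamma> * \<epsilon>) / real n) (nat \<lfloor>3 * real n * \<epsilon>\<rfloor>))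
          {xs. (MAX k\<in>{0..nat \<lfloor>3 * real n * \<epsilon>\<rfloor>}. \<bar>real_of_int (xs ! k) - fluid n \<gamma> \<epsilon> k\<bar> / (real n * \<epsilon>^2)) > \<eta>}
        \<le> exp (- (\<eta>'^2 / 96) * real n * \<epsilon>^3)"
    if "N \<le> n" "em n \<le> \<epsilon>" "\<epsilon> \<le> ep n" "-1 \<le> \<gamma>" "\<gamma> \<le> 1" for n \<epsilon> \<gamma>
    using N[OF that(1)] that \<eta>' by (intro prob_max_deviation_le) auto
  then show ?thesis
    using \<eta>' by (intro exI[of _ "\<eta>'^2 / 96"] exI[of _ N] conjI) (auto simp: Let_def fluid_def)
qed

end
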